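(* Let $l\ge1$, $m=2l$, and consider the $[[2^{2l},l+1,2^l]]$ phantom quantum Reed–Muller code, with logical states $|c\rangle_L\propto\sum_{s\in\mathrm{rs}(H_X)}|cL_X+s\rangle$ for $c\in\mathbb F_2^{l+1}$, where the rows of $L_X$ are $\mathrm{ev}(x_1\cdots x_{l-1}x_j)$ for $j=l,l+1,\dots,2l$ in this order. For an involution $\tau$ of $\mathbb F_2^{2l}$ let $F_\tau$ be the diagonal circuit applying $S=\mathrm{diag}(1,i)$ to every qubit $a$ with $\tau(a)=a$ and $\mathrm{CZ}$ to every pair $\{a,\tau(a)\}$ with $\tau(a)\neq a$. (a) Let $\tau_{SS}(a)_i=a_{2l+1-i}+1$ for $i\in[2l]$. Then $F_{\tau_{SS}}$ preserves the codespace and $F_{\tau_{SS}}|c\rangle_L=i^{c_1+c_2}|c\rangle_L$ for all $c$ (logical $S\otimes S$ on logical qubits 1 and 2, identity on the others). (b) Let $\tau_{CZ}(a)_i=a_{2l+1-i}+1$ for $i\in[2l]\setminus\{l,l+1\}$, $\tau_{CZ}(a)_l=a_l+1$, $\tau_{CZ}(a)_{l+1}=a_{l+1}+1$. Then $F_{\tau_{CZ}}$ preserves the codespace and $F_{\tau_{CZ}}|c\rangle_L=(-1)^{c_1c_2}|c\rangle_L$ for all $c$ (logical CZ between logical qubits 1 and 2).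
   Context: Coordinates of $2^{2l}$ qubits are identified with $\mathbb F_2^{2l}$; $\mathrm{ev}(f)=(f(a))_{a\in\mathbb F_2^{2l}}$ for Boolean polynomials $f$; $\mathrm{RM}(r,m)$ is the span of evaluation vectors of monomials of degree $\le r$ ($\{0\}$ if $r<0$). For $S\subseteq[m]$, $x_S=\prod_{i\in S}x_i$ and $\hat x_S=\prod_{i\notin S}(1+x_i)$. The phantom qRM code (here with $m=2l$) is the CSS code with $\mathrm{rs}(H_X)=\mathrm{RM}(l-1,m)$ and $\mathrm{rs}(H_Z)=\mathrm{RM}(m-l-1,m)+\mathrm{span}\{\mathrm{ev}(\hat x_S):|S|=l,\ S\ne\{1,\dots,l-1,j\}\text{ for all }j\in\{l,\dots,m\}\}$; its logical qubit $t$ corresponds to $X$-logical $x_1\cdots x_{l-1}x_{l+t-1}$. *)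

theory Defs
  imports Complex_Main
begin

text \<open>Points of F_2^m: extensional functions nat => bool supported on coordinates 1..m.\<close>
definition cube :: "nat \<Rightarrow> (nat \<Rightarrow> bool) set" where
  "cube m = {a. \<forall>i. i \<notin> {1..m} \<longrightarrow> \<not> a i}"

text \<open>Binary words indexed by the points of F_2^m (qubit configurations), zero outside the cube.\<close>
type_synonym word = "(nat \<Rightarrow> bool) \<Rightarrow> bool"

definition ev :: "nat \<Rightarrow> ((nat \<Rightarrow> bool) \<Rightarrow> bool) \<Rightarrow> word" where
  "ev m f = (\<lambda>a. a \<in> cube m \<and> f a)"

definition mono :: "nat set \<Rightarrow> (nat \<Rightarrow> bool) \<Rightarrow> bool" where
  "mono S = (\<lambda>a. \<forall>i\<in>S. a i)"

definition wadd :: "word \<Rightarrow> word \<Rightarrow> word" where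
  "wadd u v = (\<lambda>a. u a \<noteq> v a)"

definition xsum :: "'b set \<Rightarrow> ('b \<Rightarrow> word) \<Rightarrow> word" where
  "xsum T f = (\<lambda>a. odd (card {s\<in>T. f s a}))"

definition RM :: "nat \<Rightarrow> nat \<Rightarrow> word set" where
  "RM r m = {xsum T (\<lambda>S. ev m (mono S)) | T. T \<subseteq> {S. S \<subseteq> {1..m} \<and> card S \<le> r}}"

text \<open>Row t (t = 1..l+1) of L_X: ev(x_1 ... x_{l-1} x_{l+t-1}).\<close>
definition LX_row :: "nat \<Rightarrow> nat \<Rightarrow> word" where
  "LX_row l t = ev (2*l) (mono ({1..l-1} \<union> {l+t-1}))"

definition cLX :: "nat \<Rightarrow> (nat \<Rightarrow> bool) \<Rightarrow> word" where
  "cLX l c = xsum {t\<in>{1..l+1}. c t} (LX_row l)"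

text \<open>Unnormalised logical state |c>_L = sum over s in rs(H_X) = RM(l-1,2l) of |cL_X + s>,
  as an amplitude function on computational basis states.\<close>
definition logical_state :: "nat \<Rightarrow> (nat \<Rightarrow> bool) \<Rightarrow> word \<Rightarrow> complex" where
  "logical_state l c = (\<lambda>v. if v \<in> {wadd (cLX l c) s | s. s \<in> RM (l-1) (2*l)} then 1 else 0)"

definition codespace :: "nat \<Rightarrow> (word \<Rightarrow> complex) set" where
  "codespace l = {\<psi>. \<exists>\<alpha>. \<psi> = (\<lambda>v. \<Sum>c\<in>cube (l+1). \<alpha> c * logical_state l c v)}"

definition F_phase :: "nat \<Rightarrow> ((nat \<Rightarrow> bool) \<Rightarrow> (nat \<Rightarrow> bool)) \<Rightarrow> word \<Rightarrow> complex" where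
  "F_phase m \<tau> v =
     (\<Prod>a\<in>{a\<in>cube m. \<tau> a = a}. if v a then \<i> else 1) *
     (\<Prod>p\<in>{{a, \<tau> a} | a. a \<in> cube m \<and> \<tau> a \<noteq> a}. if (\<forall>x\<in>p. v x) then -1 else 1)"

definition F_circ :: "nat \<Rightarrow> ((nat \<Rightarrow> bool) \<Rightarrow> (nat \<Rightarrow> bool)) \<Rightarrow> (word \<Rightarrow> complex) \<Rightarrow> (word \<Rightarrow> complex)" where
  "F_circ m \<tau> \<psi> = (\<lambda>v. F_phase m \<tau> v * \<psi> v)"

definition tau_SS :: "nat \<Rightarrow> (nat \<Rightarrow> bool) \<Rightarrow> (nat \<Rightarrow> bool)" where
  "tau_SS l a = (\<lambda>i. i \<in> {1..2*l} \<and> \<not> a (2*l+1-i))"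

definition tau_CZ :: "nat \<Rightarrow> (nat \<Rightarrow> bool) \<Rightarrow> (nat \<Rightarrow> bool)" where
  "tau_CZ l a = (\<lambda>i. i \<in> {1..2*l} \<and>
      (if i = l \<or> i = l+1 then \<not> a i else \<not> a (2*l+1-i)))"

end

theory Submission
  imports Defs "HOL-Number_Theory.Cong"
begin

text \<open>
  For an involution \<tau> of the cube, F_\<tau> multiplies the basis state v by i^Q(v) with
  Q(v) = #{a. v(a) \<and> v(\<tau> a)}: a fixed point contributes i, a 2-cycle contributes i^2 = -1.
  With B(f,g) = sum_a f(a) g(\<tau> a), Q is a Z/4-valued quadratic form,
  Q(f + g) = Q(f) + Q(g) + 2 B(f,g) mod 4.  Both involutions of the theorem have the shape
  a \<mapsto> 1 + a \<circ> \<sigma> for an involution \<sigma> of the coordinates, and then B(x_S, x_T) counts the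
  points of a subcube: it is 2^(m - |S \<union> \<sigma> T|) or 0.  Hence Q vanishes mod 4 on
  RM(l-1,2l) and B(u,s) is even for u in RM(l,2l), s in RM(l-1,2l), so Q is constant mod 4
  on every coset c L_X + RM(l-1,2l) and each logical state is an eigenvector of F_\<tau>.
  Since \<sigma> moves the extra coordinate of every row of L_X after the second into the common
  factor x_1 ... x_(l-1), only the first two rows contribute to Q(c L_X) mod 4.
\<close>

section \<open>Involutions\<close>

definition involution_on :: "'a set \<Rightarrow> ('a \<Rightarrow> 'a) \<Rightarrow> bool" where
  "involution_on A \<tau> \<longleftrightarrow> (\<forall>a\<in>A. \<tau> a \<in> A \<and> \<tau> (\<tau> a) = a)"

lemma involution_on_pair_eq:
  assumes "involution_on A \<tau>" "a \<in> A" "x \<in> {a, \<tau> a}"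
  shows "{a, \<tau> a} = {x, \<tau> x}"
  using assms by (auto simp: involution_on_def)

lemma image_involution_on:
  assumes "involution_on A \<sigma>" "B \<subseteq> A"
  shows "\<sigma> ` B = {x\<in>A. \<sigma> x \<in> B}"
  using assms by (auto simp: involution_on_def image_iff) (metis subsetD)

lemma sum_involution_on_swap:
  assumes "involution_on A \<tau>"
  shows "(\<Sum>a\<in>A. h a (\<tau> a)) = (\<Sum>a\<in>A. h (\<tau> a) a)"
proof -
  have "bij_betw \<tau> A A"
    by (rule bij_betw_byWitness[where f' = \<tau>]) (use assms in \<open>auto simp: involution_on_def\<close>)
  then have "(\<Sum>a\<in>A. h (\<tau> a) (\<tau> (\<tau> a))) = (\<Sum>a\<in>A. h a (\<tau> a))"
    by (rule sum.reindex_bij_betw)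
  also have "(\<Sum>a\<in>A. h (\<tau> a) (\<tau> (\<tau> a))) = (\<Sum>a\<in>A. h (\<tau> a) a)"
    using assms by (intro sum.cong) (auto simp: involution_on_def)
  finally show ?thesis by simp
qed

lemma card_involution_on_filter:
  assumes "finite A" "involution_on A \<tau>"
  shows "card {a\<in>A. w a \<and> w (\<tau> a)}
       = card {a\<in>A. \<tau> a = a \<and> w a} + 2 * card {p\<in>{{a, \<tau> a} | a. a \<in> A \<and> \<tau> a \<noteq> a}. \<forall>x\<in>p. w x}"
proof -
  define Pw where "Pw = {p\<in>{{a, \<tau> a} | a. a \<in> A \<and> \<tau> a \<noteq> a}. \<forall>x\<in>p. w x}"
  have \<tau>: "\<tau> a \<in> A" "\<tau> (\<tau> a) = a" if "a \<in> A" for a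
    using assms(2) that by (auto simp: involution_on_def)
  have split: "{a\<in>A. w a \<and> w (\<tau> a)} = {a\<in>A. \<tau> a = a \<and> w a} \<union> \<Union>Pw"
    by (auto simp: Pw_def dest: \<tau>)
  have "Pw \<subseteq> (\<lambda>a. {a, \<tau> a}) ` A" by (auto simp: Pw_def)
  then have "finite Pw" using assms(1) by (simp add: finite_subset)
  moreover have "\<forall>p\<in>Pw. card p = 2" by (auto simp: Pw_def)
  moreover have "p \<inter> q = {}" if pq: "p \<in> Pw" "q \<in> Pw" "p \<noteq> q" for p q
  proof (rule ccontr)
    assume "p \<inter> q \<noteq> {}"
    then obtain x where x: "x \<in> p" "x \<in> q" by blast
    obtain a b where "a \<in> A" "p = {a, \<tau> a}" "b \<in> A" "q = {b, \<tau> b}"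
      using pq(1,2) by (auto simp: Pw_def)
    then have "p = {x, \<tau> x}" "q = {x, \<tau> x}"
      using x involution_on_pair_eq[OF assms(2)] by metis+
    with \<open>p \<noteq> q\<close> show False by simp
  qed
  moreover have "\<Union>Pw \<subseteq> A" by (auto simp: Pw_def dest: \<tau>)
  then have "finite (\<Union>Pw)" using assms(1) by (rule finite_subset)
  ultimately have "2 * card Pw = card (\<Union>Pw)"
    by (intro card_partition) auto
  moreover have "card ({a\<in>A. \<tau> a = a \<and> w a} \<union> \<Union>Pw) = card {a\<in>A. \<tau> a = a \<and> w a} + card (\<Union>Pw)"
    using \<open>finite (\<Union>Pw)\<close> assms(1) by (intro card_Un_disjoint) (auto simp: Pw_def dest: \<tau>)
  ultimately show ?thesis by (simp add: split Pw_def)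
qed

section \<open>Coordinate flips and the phase of F\<close>

lemma finite_cube: "finite (cube m)"
proof -
  have "cube m \<subseteq> (\<lambda>S i. i \<in> S) ` Pow {1..m}"
  proof
    fix a assume "a \<in> cube m"
    then have "a = (\<lambda>i. i \<in> {i\<in>{1..m}. a i})" by (auto simp: cube_def)
    then show "a \<in> (\<lambda>S i. i \<in> S) ` Pow {1..m}" by blast
  qed
  then show ?thesis by (rule finite_subset) simp
qed

definition coord_flip :: "nat \<Rightarrow> (nat \<Rightarrow> nat) \<Rightarrow> (nat \<Rightarrow> bool) \<Rightarrow> (nat \<Rightarrow> bool)" where
  "coord_flip m \<sigma> a = (\<lambda>i. i \<in> {1..m} \<and> \<not> a (\<sigma> i))"

lemma coord_flip_in_cube: "coord_flip m \<sigma> a \<in> cube m"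
  by (auto simp: cube_def coord_flip_def)

lemma involution_on_coord_flip:
  assumes "involution_on {1..m} \<sigma>"
  shows "involution_on (cube m) (coord_flip m \<sigma>)"
  unfolding involution_on_def
proof (intro ballI conjI)
  fix a assume a: "a \<in> cube m"
  show "coord_flip m \<sigma> a \<in> cube m" by (rule coord_flip_in_cube)
  show "coord_flip m \<sigma> (coord_flip m \<sigma> a) = a"
  proof
    fix i show "coord_flip m \<sigma> (coord_flip m \<sigma> a) i = a i"
      using a assms by (cases "i \<in> {1..m}") (auto simp: cube_def coord_flip_def involution_on_def)
  qed
qed

lemma F_phase_eq_i_power:
  assumes "involution_on (cube m) \<tau>"
  shows "F_phase m \<tau> v = \<i> ^ card {a\<in>cube m. v a \<and> v (\<tau> a)}"
proof -
  define P where "P = {{a, \<tau> a} | a. a \<in> cube m \<and> \<tau> a \<noteq> a}"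
  have "P = (\<lambda>a. {a, \<tau> a}) ` {a\<in>cube m. \<tau> a \<noteq> a}" by (auto simp: P_def)
  then have "finite P" by (simp add: finite_cube)
  have "(\<Prod>a\<in>{a\<in>cube m. \<tau> a = a}. if v a then \<i> else 1) = \<i> ^ card {a\<in>cube m. \<tau> a = a \<and> v a}"
    using prod.inter_filter[of "{a\<in>cube m. \<tau> a = a}" "\<lambda>_. \<i>" v] by (simp add: finite_cube conj_ac)
  moreover have "(\<Prod>p\<in>P. if \<forall>x\<in>p. v x then -1 else 1) = (-1::complex) ^ card {p\<in>P. \<forall>x\<in>p. v x}"
    using prod.inter_filter[OF \<open>finite P\<close>, of "\<lambda>_. -1::complex" "\<lambda>p. \<forall>x\<in>p. v x"] by simp
  ultimately have "F_phase m \<tau> v = \<i> ^ card {a\<in>cube m. \<tau> a = a \<and> v a} * \<i> ^ (2 * card {p\<in>P. \<forall>x\<in>p. v x})"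
    by (simp add: F_phase_def P_def power_mult)
  also have "\<dots> = \<i> ^ card {a\<in>cube m. v a \<and> v (\<tau> a)}"
    by (simp add: card_involution_on_filter[OF finite_cube assms] P_def power_add)
  finally show ?thesis .
qed

lemma i_power_cong:
  assumes "[n = k] (mod 4)"
  shows "\<i> ^ n = \<i> ^ k"
proof -
  have "\<i> ^ j = \<i> ^ (j mod 4)" for j :: nat
  proof -
    have "\<i> ^ j = (\<i> ^ 4) ^ (j div 4) * \<i> ^ (j mod 4)"
      by (simp only: power_mult[symmetric] power_add[symmetric] mult_div_mod_eq)
    then show ?thesis by simp
  qed
  then show ?thesis using assms unfolding cong_def by metis
qed

section \<open>The twisted inner product\<close>

definition twisted_inner :: "nat \<Rightarrow> ((nat \<Rightarrow> bool) \<Rightarrow> (nat \<Rightarrow> bool)) \<Rightarrow> word \<Rightarrow> word \<Rightarrow> int" where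
  "twisted_inner m \<tau> f g = (\<Sum>a\<in>cube m. of_bool (f a \<and> g (\<tau> a)))"

lemma twisted_square_eq_card:
  "twisted_inner m \<tau> v v = int (card {a\<in>cube m. v a \<and> v (\<tau> a)})"
  unfolding twisted_inner_def by (simp add: finite_cube Int_def)

lemma twisted_inner_False [simp]:
  "twisted_inner m \<tau> (\<lambda>_. False) g = 0" "twisted_inner m \<tau> f (\<lambda>_. False) = 0"
  by (simp_all add: twisted_inner_def)

lemma twisted_inner_commute:
  assumes "involution_on (cube m) \<tau>"
  shows "twisted_inner m \<tau> f g = twisted_inner m \<tau> g f"
  unfolding twisted_inner_def
  using sum_involution_on_swap[OF assms, of "\<lambda>a b. of_bool (f a \<and> g b)"] by (simp add: conj_commute)

lemma twisted_inner_wadd_left: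
  "twisted_inner m \<tau> (wadd f g) h
     = twisted_inner m \<tau> f h + twisted_inner m \<tau> g h - 2 * twisted_inner m \<tau> (\<lambda>a. f a \<and> g a) h"
  unfolding twisted_inner_def sum_distrib_left sum.distrib[symmetric] sum_subtractf[symmetric]
  by (rule sum.cong) (auto simp: wadd_def)

lemma twisted_inner_wadd_right:
  "twisted_inner m \<tau> h (wadd f g)
     = twisted_inner m \<tau> h f + twisted_inner m \<tau> h g - 2 * twisted_inner m \<tau> h (\<lambda>a. f a \<and> g a)"
  unfolding twisted_inner_def sum_distrib_left sum.distrib[symmetric] sum_subtractf[symmetric]
  by (rule sum.cong) (auto simp: wadd_def)

lemma twisted_square_wadd:
  assumes "involution_on (cube m) \<tau>"
  shows "twisted_inner m \<tau> (wadd f g) (wadd f g)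
     = twisted_inner m \<tau> f f + twisted_inner m \<tau> g g + 2 * twisted_inner m \<tau> f g
       - 4 * twisted_inner m \<tau> (\<lambda>a. f a \<and> g a) (\<lambda>a. f a \<or> g a)"
proof -
  let ?B = "twisted_inner m \<tau>" and ?fg = "\<lambda>a. f a \<and> g a"
  have "?B (wadd f g) (wadd f g) = ?B f f + ?B g g + ?B f g + ?B g f
      - 2 * ?B ?fg (wadd f g) - 2 * ?B (wadd f g) ?fg - 4 * ?B ?fg ?fg"
    unfolding twisted_inner_def sum_distrib_left sum.distrib[symmetric] sum_subtractf[symmetric]
    by (rule sum.cong) (auto simp: wadd_def)
  moreover have "?B ?fg (wadd f g) + ?B ?fg ?fg = ?B ?fg (\<lambda>a. f a \<or> g a)"
    unfolding twisted_inner_def sum.distrib[symmetric]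
    by (rule sum.cong) (auto simp: wadd_def)
  ultimately show ?thesis
    using twisted_inner_commute[OF assms, of g f] twisted_inner_commute[OF assms, of "wadd f g" ?fg]
    by simp
qed

lemma twisted_square_wadd_cong:
  assumes "involution_on (cube m) \<tau>" "4 dvd twisted_inner m \<tau> g g" "2 dvd twisted_inner m \<tau> f g"
  shows "[twisted_inner m \<tau> (wadd f g) (wadd f g) = twisted_inner m \<tau> f f] (mod 4)"
proof -
  have "4 dvd 2 * twisted_inner m \<tau> f g" using assms(3) by (auto elim!: dvdE)
  then show ?thesis
    using assms(2) unfolding twisted_square_wadd[OF assms(1)] cong_iff_dvd_diff
    by (simp add: algebra_simps)
qed

lemma xsum_empty [simp]: "xsum {} \<phi> = (\<lambda>_. False)"
  by (simp add: xsum_def)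

lemma xsum_insert:
  assumes "finite T" "s \<notin> T"
  shows "xsum (insert s T) \<phi> = wadd (\<phi> s) (xsum T \<phi>)"
proof
  fix a
  have "{t\<in>insert s T. \<phi> t a} = (if \<phi> s a then insert s {t\<in>T. \<phi> t a} else {t\<in>T. \<phi> t a})"
    by auto
  then show "xsum (insert s T) \<phi> a = wadd (\<phi> s) (xsum T \<phi>) a"
    using assms by (simp add: xsum_def wadd_def)
qed

lemma xsum_singleton [simp]: "xsum {s} \<phi> = \<phi> s"
  using xsum_insert[of "{}" s \<phi>] by (simp add: wadd_def)

lemma xsum_Un_disjoint:
  assumes "finite T1" "finite T2" "T1 \<inter> T2 = {}"
  shows "xsum (T1 \<union> T2) \<phi> = wadd (xsum T1 \<phi>) (xsum T2 \<phi>)"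
proof
  fix a
  have "{t\<in>T1 \<union> T2. \<phi> t a} = {t\<in>T1. \<phi> t a} \<union> {t\<in>T2. \<phi> t a}" by auto
  moreover have "card ({t\<in>T1. \<phi> t a} \<union> {t\<in>T2. \<phi> t a}) = card {t\<in>T1. \<phi> t a} + card {t\<in>T2. \<phi> t a}"
    using assms by (intro card_Un_disjoint) auto
  ultimately show "xsum (T1 \<union> T2) \<phi> a = wadd (xsum T1 \<phi>) (xsum T2 \<phi>) a"
    by (simp add: xsum_def wadd_def)
qed

lemma xsum_reindex:
  assumes "inj_on h T"
  shows "xsum (h ` T) \<phi> = xsum T (\<phi> \<circ> h)"
proof
  fix a
  have "{s\<in>h ` T. \<phi> s a} = h ` {t\<in>T. \<phi> (h t) a}" by auto
  moreover have "inj_on h {t\<in>T. \<phi> (h t) a}" using assms by (rule inj_on_subset) auto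
  ultimately show "xsum (h ` T) \<phi> a = xsum T (\<phi> \<circ> h) a"
    by (simp add: xsum_def card_image)
qed

lemma even_twisted_inner_xsum:
  assumes "finite I" "finite J" "\<forall>i\<in>I. \<forall>j\<in>J. 2 dvd twisted_inner m \<tau> (\<phi> i) (\<psi> j)"
  shows "2 dvd twisted_inner m \<tau> (xsum I \<phi>) (xsum J \<psi>)"
proof -
  have right: "2 dvd twisted_inner m \<tau> f (xsum J \<psi>)" if "\<forall>j\<in>J. 2 dvd twisted_inner m \<tau> f (\<psi> j)" for f
    using assms(2) that
    by (induction J rule: finite_induct)
      (simp_all add: xsum_insert twisted_inner_wadd_right)
  show ?thesis
    using assms(1,3)
    by (induction I rule: finite_induct)
      (simp_all add: xsum_insert twisted_inner_wadd_left right)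
qed

lemma four_dvd_twisted_square_xsum:
  assumes "involution_on (cube m) \<tau>" "finite I"
    "\<forall>i\<in>I. 4 dvd twisted_inner m \<tau> (\<phi> i) (\<phi> i)"
    "\<forall>i\<in>I. \<forall>j\<in>I. 2 dvd twisted_inner m \<tau> (\<phi> i) (\<phi> j)"
  shows "4 dvd twisted_inner m \<tau> (xsum I \<phi>) (xsum I \<phi>)"
  using assms(2-)
proof (induction I rule: finite_induct)
  case empty
  then show ?case by simp
next
  case (insert i I)
  have "2 dvd twisted_inner m \<tau> (xsum {i} \<phi>) (xsum I \<phi>)"
    using insert by (intro even_twisted_inner_xsum) auto
  then have "[twisted_inner m \<tau> (wadd (\<phi> i) (xsum I \<phi>)) (wadd (\<phi> i) (xsum I \<phi>))
      = twisted_inner m \<tau> (\<phi> i) (\<phi> i)] (mod 4)"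
    using insert by (intro twisted_square_wadd_cong[OF assms(1)]) auto
  then show ?case
    using insert by (simp add: xsum_insert cong_0_iff[symmetric]) (meson cong_trans)
qed

section \<open>Monomials and Reed-Muller codes\<close>

lemma card_subcube:
  assumes "A \<subseteq> {1..m}" "Z \<subseteq> {1..m}" "A \<inter> Z = {}"
  shows "card {a\<in>cube m. (\<forall>i\<in>A. a i) \<and> (\<forall>j\<in>Z. \<not> a j)} = 2 ^ (m - card (A \<union> Z))"
proof -
  define R where "R = {1..m} - (A \<union> Z)"
  define X where "X = {a\<in>cube m. (\<forall>i\<in>A. a i) \<and> (\<forall>j\<in>Z. \<not> a j)}"
  have "bij_betw (\<lambda>a. {i\<in>R. a i}) X (Pow R)"
  proof (rule bij_betw_byWitness[where f' = "\<lambda>U i. i \<in> A \<or> i \<in> U"])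
    show "\<forall>a\<in>X. (\<lambda>i. i \<in> A \<or> i \<in> {i\<in>R. a i}) = a"
    proof
      fix a assume a: "a \<in> X"
      show "(\<lambda>i. i \<in> A \<or> i \<in> {i\<in>R. a i}) = a"
      proof
        fix i show "(i \<in> A \<or> i \<in> {i\<in>R. a i}) = a i"
          using a by (cases "i \<in> {1..m}") (auto simp: X_def R_def cube_def)
      qed
    qed
    show "\<forall>U\<in>Pow R. {i\<in>R. i \<in> A \<or> i \<in> U} = U" by (auto simp: R_def)
    show "(\<lambda>a. {i\<in>R. a i}) ` X \<subseteq> Pow R" by auto
    show "(\<lambda>U i. i \<in> A \<or> i \<in> U) ` Pow R \<subseteq> X"
      using assms by (auto simp: R_def X_def cube_def)
  qed
  then have "card X = 2 ^ card R"
    by (simp add: bij_betw_same_card R_def card_Pow)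
  also have "card R = m - card (A \<union> Z)"
    unfolding R_def using assms by (subst card_Diff_subset) (auto intro: finite_subset)
  finally show ?thesis by (simp add: X_def)
qed

lemma twisted_inner_monomials:
  assumes "S \<subseteq> {1..m}" "T \<subseteq> {1..m}" "\<sigma> ` T \<subseteq> {1..m}"
  shows "twisted_inner m (coord_flip m \<sigma>) (ev m (mono S)) (ev m (mono T))
       = (if S \<inter> \<sigma> ` T = {} then 2 ^ (m - card (S \<union> \<sigma> ` T)) else 0)"
proof -
  define X where "X = {a\<in>cube m. (\<forall>i\<in>S. a i) \<and> (\<forall>j\<in>\<sigma> ` T. \<not> a j)}"
  have "{a\<in>cube m. ev m (mono S) a \<and> ev m (mono T) (coord_flip m \<sigma> a)} = X"
    using assms(2) coord_flip_in_cube[of m \<sigma>] by (auto simp: X_def ev_def mono_def coord_flip_def)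
  then have "twisted_inner m (coord_flip m \<sigma>) (ev m (mono S)) (ev m (mono T)) = int (card X)"
    by (simp add: twisted_inner_def finite_cube Int_def)
  moreover have "X = {}" if "S \<inter> \<sigma> ` T \<noteq> {}" using that by (auto simp: X_def)
  moreover have "card X = 2 ^ (m - card (S \<union> \<sigma> ` T))" if "S \<inter> \<sigma> ` T = {}"
    unfolding X_def using assms(1,3) that by (rule card_subcube)
  ultimately show ?thesis by simp
qed

lemma twisted_inner_monomials_complementary:
  assumes "involution_on {1..m} \<sigma>" "S \<subseteq> {1..m}" "T \<subseteq> {1..m}" "\<forall>i\<in>{1..m}. i \<in> S \<longleftrightarrow> \<sigma> i \<notin> T"
  shows "twisted_inner m (coord_flip m \<sigma>) (ev m (mono S)) (ev m (mono T)) = 1"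
proof -
  have "\<sigma> ` T \<subseteq> {1..m}" "S \<inter> \<sigma> ` T = {}" "S \<union> \<sigma> ` T = {1..m}"
    unfolding image_involution_on[OF assms(1,3)] using assms(2,4) by auto
  then show ?thesis using twisted_inner_monomials[OF assms(2,3)] by simp
qed

lemma twisted_inner_monomials_overlap:
  assumes "involution_on {1..m} \<sigma>" "S \<subseteq> {1..m}" "T \<subseteq> {1..m}" "j \<in> T" "\<sigma> j \<in> S"
  shows "twisted_inner m (coord_flip m \<sigma>) (ev m (mono S)) (ev m (mono T)) = 0"
proof -
  have "\<sigma> ` T \<subseteq> {1..m}" using assms(1,3) by (auto simp: involution_on_def)
  moreover have "S \<inter> \<sigma> ` T \<noteq> {}" using assms(4,5) by blast
  ultimately show ?thesis using assms(2,3) by (simp add: twisted_inner_monomials)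
qed

lemma two_power_dvd_twisted_inner_monomials:
  assumes "involution_on {1..m} \<sigma>" "S \<subseteq> {1..m}" "T \<subseteq> {1..m}" "card S + card T + k \<le> m"
  shows "2 ^ k dvd twisted_inner m (coord_flip m \<sigma>) (ev m (mono S)) (ev m (mono T))"
proof -
  have \<sigma>T: "\<sigma> ` T \<subseteq> {1..m}" using assms(1,3) by (auto simp: involution_on_def)
  have "finite T" using assms(3) by (rule finite_subset) simp
  then have "card (S \<union> \<sigma> ` T) \<le> card S + card T"
    by (meson card_Un_le card_image_le add_le_mono le_trans order_refl)
  then have "k \<le> m - card (S \<union> \<sigma> ` T)" using assms(4) by linarith
  then have "(2::int) ^ k dvd 2 ^ (m - card (S \<union> \<sigma> ` T))" by (rule le_imp_power_dvd)
  then show ?thesis by (simp add: twisted_inner_monomials[OF assms(2,3) \<sigma>T])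
qed

lemma RM_elim:
  assumes "s \<in> RM r m"
  obtains T where "finite T" "\<forall>S\<in>T. S \<subseteq> {1..m} \<and> card S \<le> r" "s = xsum T (\<lambda>S. ev m (mono S))"
proof -
  obtain T where T: "T \<subseteq> {S. S \<subseteq> {1..m} \<and> card S \<le> r}" "s = xsum T (\<lambda>S. ev m (mono S))"
    using assms by (auto simp: RM_def)
  moreover have "T \<subseteq> Pow {1..m}" using T(1) by auto
  then have "finite T" by (rule finite_subset) simp
  ultimately show ?thesis using that by blast
qed

lemma four_dvd_twisted_square_RM:
  assumes "involution_on {1..m} \<sigma>" "s \<in> RM r m" "2 * r + 2 \<le> m"
  shows "4 dvd twisted_inner m (coord_flip m \<sigma>) s s"
proof -
  obtain T where T: "finite T" "\<forall>S\<in>T. S \<subseteq> {1..m} \<and> card S \<le> r" "s = xsum T (\<lambda>S. ev m (mono S))"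
    using assms(2) by (rule RM_elim)
  have "2 ^ k dvd twisted_inner m (coord_flip m \<sigma>) (ev m (mono S)) (ev m (mono S'))"
    if "S \<in> T" "S' \<in> T" "k \<le> 2" for S S' k
  proof (rule two_power_dvd_twisted_inner_monomials[OF assms(1)])
    show "S \<subseteq> {1..m}" "S' \<subseteq> {1..m}" using T(2) that by auto
    have "card S \<le> r" "card S' \<le> r" using T(2) that by auto
    then show "card S + card S' + k \<le> m" using that(3) assms(3) by linarith
  qed
  from this[of _ _ 2] this[of _ _ 1] show ?thesis
    unfolding T(3) by (intro four_dvd_twisted_square_xsum involution_on_coord_flip assms(1) T(1)) auto
qed

lemma even_twisted_inner_RM:
  assumes "involution_on {1..m} \<sigma>" "u \<in> RM r m" "s \<in> RM r' m" "r + r' < m"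
  shows "2 dvd twisted_inner m (coord_flip m \<sigma>) u s"
proof -
  obtain T where T: "finite T" "\<forall>S\<in>T. S \<subseteq> {1..m} \<and> card S \<le> r" "u = xsum T (\<lambda>S. ev m (mono S))"
    using assms(2) by (rule RM_elim)
  obtain T' where T': "finite T'" "\<forall>S\<in>T'. S \<subseteq> {1..m} \<and> card S \<le> r'" "s = xsum T' (\<lambda>S. ev m (mono S))"
    using assms(3) by (rule RM_elim)
  show ?thesis
    unfolding T(3) T'(3)
  proof (intro even_twisted_inner_xsum T(1) T'(1) ballI)
    fix S S' assume "S \<in> T" "S' \<in> T'"
    then have "S \<subseteq> {1..m}" "card S \<le> r" "S' \<subseteq> {1..m}" "card S' \<le> r'"
      using T(2) T'(2) by auto
    then show "2 dvd twisted_inner m (coord_flip m \<sigma>) (ev m (mono S)) (ev m (mono S'))"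
      using assms(4) two_power_dvd_twisted_inner_monomials[OF assms(1), of S S' 1] by simp
  qed
qed

lemma twisted_square_RM_coset:
  assumes "involution_on {1..m} \<sigma>" "u \<in> RM r m" "s \<in> RM r' m" "r + r' < m" "2 * r' + 2 \<le> m"
  shows "[twisted_inner m (coord_flip m \<sigma>) (wadd u s) (wadd u s)
        = twisted_inner m (coord_flip m \<sigma>) u u] (mod 4)"
  using assms
  by (intro twisted_square_wadd_cong involution_on_coord_flip four_dvd_twisted_square_RM even_twisted_inner_RM)

section \<open>Logical action on the phantom code\<close>

lemma cLX_in_RM:
  assumes "l \<ge> 1"
  shows "cLX l c \<in> RM l (2*l)"
proof -
  define supp where "supp t = {1..l-1} \<union> {l+t-1}" for t
  define C where "C = {t\<in>{1..l+1}. c t}"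
  have inj: "inj_on supp C"
  proof (rule inj_onI)
    fix t t' assume "t \<in> C" "t' \<in> C" "supp t = supp t'"
    moreover have "l+t-1 \<in> supp t" by (simp add: supp_def)
    ultimately have "l+t-1 \<in> supp t'" by simp
    then show "t = t'" using \<open>t \<in> C\<close> \<open>t' \<in> C\<close> by (auto simp: supp_def C_def)
  qed
  have "cLX l c = xsum (supp ` C) (\<lambda>S. ev (2*l) (mono S))"
    unfolding xsum_reindex[OF inj] by (simp add: cLX_def C_def supp_def comp_def LX_row_def[abs_def])
  moreover have "card (supp t) \<le> l" for t
    using card_Un_le[of "{1..l-1}" "{l+t-1}"] assms by (simp add: supp_def)
  then have "supp ` C \<subseteq> {S. S \<subseteq> {1..2*l} \<and> card S \<le> l}"
    using assms by (auto simp: supp_def C_def)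
  ultimately show ?thesis by (auto simp: RM_def)
qed

lemma twisted_inner_LX_row_vanish:
  assumes "l \<ge> 1" "involution_on {1..2*l} \<sigma>" "t \<in> {1..l+1}" "t' \<in> {3..l+1}" "\<sigma> (l+t'-1) = l+2-t'"
  shows "twisted_inner (2*l) (coord_flip (2*l) \<sigma>) (LX_row l t) (LX_row l t') = 0"
  unfolding LX_row_def
  by (rule twisted_inner_monomials_overlap[OF assms(2), where j = "l+t'-1"]) (use assms in auto)

lemma twisted_square_cLX:
  assumes l: "l \<ge> 1" and \<sigma>: "involution_on {1..2*l} \<sigma>" and hs: "\<forall>t\<in>{3..l+1}. \<sigma> (l+t-1) = l+2-t"
  defines "B \<equiv> twisted_inner (2*l) (coord_flip (2*l) \<sigma>)"
  shows "[B (cLX l c) (cLX l c) = of_bool (c 1) * B (LX_row l 1) (LX_row l 1)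
      + of_bool (c 2) * B (LX_row l 2) (LX_row l 2) + 2 * of_bool (c 1 \<and> c 2) * B (LX_row l 1) (LX_row l 2)] (mod 4)"
proof -
  have \<tau>: "involution_on (cube (2*l)) (coord_flip (2*l) \<sigma>)" by (rule involution_on_coord_flip[OF \<sigma>])
  define C1 where "C1 = {t\<in>{1,2}. c t}"
  define C2 where "C2 = {t\<in>{3..l+1}. c t}"
  have C: "{t\<in>{1..l+1}. c t} = C1 \<union> C2" using l by (auto simp: C1_def C2_def)
  have split: "cLX l c = wadd (xsum C1 (LX_row l)) (xsum C2 (LX_row l))"
    unfolding cLX_def C by (intro xsum_Un_disjoint) (auto simp: C1_def C2_def)
  have vanish: "B (LX_row l t) (LX_row l t') = 0" if "t \<in> {1..l+1}" "t' \<in> C2" for t t'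
    unfolding B_def using that hs by (intro twisted_inner_LX_row_vanish[OF l \<sigma>]) (auto simp: C2_def)
  have "4 dvd B (xsum C2 (LX_row l)) (xsum C2 (LX_row l))"
    unfolding B_def using vanish l
    by (intro four_dvd_twisted_square_xsum[OF \<tau>]) (auto simp: B_def C2_def)
  moreover have "2 dvd B (xsum C1 (LX_row l)) (xsum C2 (LX_row l))"
    unfolding B_def
  proof (intro even_twisted_inner_xsum ballI)
    fix t t' assume "t \<in> C1" "t' \<in> C2"
    then have "B (LX_row l t) (LX_row l t') = 0" using l by (intro vanish) (auto simp: C1_def)
    then show "2 dvd twisted_inner (2*l) (coord_flip (2*l) \<sigma>) (LX_row l t) (LX_row l t')"
      by (simp add: B_def)
  qed (simp_all add: C1_def C2_def)
  ultimately have "[B (cLX l c) (cLX l c) = B (xsum C1 (LX_row l)) (xsum C1 (LX_row l))] (mod 4)"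
    unfolding split B_def by (rule twisted_square_wadd_cong[OF \<tau>])
  also have "[B (xsum C1 (LX_row l)) (xsum C1 (LX_row l)) = of_bool (c 1) * B (LX_row l 1) (LX_row l 1)
      + of_bool (c 2) * B (LX_row l 2) (LX_row l 2) + 2 * of_bool (c 1 \<and> c 2) * B (LX_row l 1) (LX_row l 2)] (mod 4)"
  proof (cases "c 1"; cases "c 2")
    assume "c 1" "c 2"
    then have "C1 = insert 1 {2}" by (auto simp: C1_def)
    then have "xsum C1 (LX_row l) = wadd (LX_row l 1) (LX_row l 2)" by (simp add: xsum_insert)
    with \<open>c 1\<close> \<open>c 2\<close> show ?thesis
      unfolding B_def cong_iff_dvd_diff by (simp add: twisted_square_wadd[OF \<tau>])
  next
    assume "c 1" "\<not> c 2"
    then have "C1 = {1}" by (auto simp: C1_def)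
    with \<open>c 1\<close> \<open>\<not> c 2\<close> show ?thesis by simp
  next
    assume "\<not> c 1" "c 2"
    then have "C1 = {2}" by (auto simp: C1_def)
    with \<open>\<not> c 1\<close> \<open>c 2\<close> show ?thesis by simp
  next
    assume "\<not> c 1" "\<not> c 2"
    then have "C1 = {}" by (auto simp: C1_def)
    with \<open>\<not> c 1\<close> \<open>\<not> c 2\<close> show ?thesis by (simp add: B_def)
  qed
  finally show ?thesis .
qed

lemma F_circ_coord_flip_logical_state:
  assumes l: "l \<ge> 1" and \<sigma>: "involution_on {1..2*l} \<sigma>" and hs: "\<forall>t\<in>{3..l+1}. \<sigma> (l+t-1) = l+2-t"
  defines "B \<equiv> twisted_inner (2*l) (coord_flip (2*l) \<sigma>)"
  assumes k: "[of_bool (c 1) * B (LX_row l 1) (LX_row l 1) + of_bool (c 2) * B (LX_row l 2) (LX_row l 2)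
      + 2 * of_bool (c 1 \<and> c 2) * B (LX_row l 1) (LX_row l 2) = int k] (mod 4)"
  shows "F_circ (2*l) (coord_flip (2*l) \<sigma>) (logical_state l c) = (\<lambda>v. \<i> ^ k * logical_state l c v)"
proof
  fix v
  show "F_circ (2*l) (coord_flip (2*l) \<sigma>) (logical_state l c) v = \<i> ^ k * logical_state l c v"
  proof (cases "v \<in> {wadd (cLX l c) s | s. s \<in> RM (l-1) (2*l)}")
    case True
    then obtain s where s: "s \<in> RM (l-1) (2*l)" and v: "v = wadd (cLX l c) s" by blast
    have "[B v v = B (cLX l c) (cLX l c)] (mod 4)"
      unfolding B_def v using l by (intro twisted_square_RM_coset[OF \<sigma> cLX_in_RM s]) auto
    also have "[B (cLX l c) (cLX l c) = int k] (mod 4)"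
      using twisted_square_cLX[OF l \<sigma> hs, of c] k unfolding B_def by (rule cong_trans)
    finally have "[card {a\<in>cube (2*l). v a \<and> v (coord_flip (2*l) \<sigma> a)} = k] (mod 4)"
      unfolding B_def twisted_square_eq_card by (metis cong_int_iff of_nat_numeral)
    then have "F_phase (2*l) (coord_flip (2*l) \<sigma>) v = \<i> ^ k"
      by (simp add: F_phase_eq_i_power[OF involution_on_coord_flip[OF \<sigma>]] i_power_cong)
    with True show ?thesis by (simp add: F_circ_def logical_state_def)
  next
    case False
    then show ?thesis by (auto simp: F_circ_def logical_state_def)
  qed
qed

lemma F_circ_codespace:
  assumes "\<forall>c\<in>cube (l+1). F_circ m \<tau> (logical_state l c) = (\<lambda>v. ph c * logical_state l c v)"
    and "\<psi> \<in> codespace l"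
  shows "F_circ m \<tau> \<psi> \<in> codespace l"
proof -
  obtain \<alpha> where \<psi>: "\<psi> = (\<lambda>v. \<Sum>c\<in>cube (l+1). \<alpha> c * logical_state l c v)"
    using assms(2) by (auto simp: codespace_def)
  have eigen: "F_phase m \<tau> v * logical_state l c v = ph c * logical_state l c v" if "c \<in> cube (l+1)" for c v
    using fun_cong[OF assms(1)[rule_format, OF that], of v] by (simp add: F_circ_def)
  have "F_circ m \<tau> \<psi> = (\<lambda>v. \<Sum>c\<in>cube (l+1). (\<alpha> c * ph c) * logical_state l c v)"
  proof
    fix v
    have "F_circ m \<tau> \<psi> v = (\<Sum>c\<in>cube (l+1). \<alpha> c * (F_phase m \<tau> v * logical_state l c v))"
      by (simp add: F_circ_def \<psi> sum_distrib_left algebra_simps)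
    also have "\<dots> = (\<Sum>c\<in>cube (l+1). (\<alpha> c * ph c) * logical_state l c v)"
      by (rule sum.cong) (simp_all add: eigen)
    finally show "F_circ m \<tau> \<psi> v = (\<Sum>c\<in>cube (l+1). (\<alpha> c * ph c) * logical_state l c v)" .
  qed
  then show ?thesis by (auto simp: codespace_def)
qed

lemma tau_SS_eq_coord_flip: "tau_SS l = coord_flip (2*l) (\<lambda>i. 2*l+1-i)"
  by (simp add: fun_eq_iff tau_SS_def coord_flip_def)

lemma tau_CZ_eq_coord_flip:
  "tau_CZ l = coord_flip (2*l) (\<lambda>i. if i = l \<or> i = l+1 then i else 2*l+1-i)"
  by (simp add: fun_eq_iff tau_CZ_def coord_flip_def)

lemma twisted_inner_tau_SS_LX_rows:
  assumes l: "l \<ge> 1"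
  shows "twisted_inner (2*l) (tau_SS l) (LX_row l 1) (LX_row l 1) = 1"
    and "twisted_inner (2*l) (tau_SS l) (LX_row l 2) (LX_row l 2) = 1"
    and "twisted_inner (2*l) (tau_SS l) (LX_row l 1) (LX_row l 2) = 0"
proof -
  have \<sigma>: "involution_on {1..2*l} (\<lambda>i. 2*l+1-i)" by (auto simp: involution_on_def)
  have sub: "{1..l-1} \<union> {l+t-1} \<subseteq> {1..2*l}" if "t \<in> {1,2}" for t using l that by auto
  show "twisted_inner (2*l) (tau_SS l) (LX_row l 1) (LX_row l 1) = 1"
    "twisted_inner (2*l) (tau_SS l) (LX_row l 2) (LX_row l 2) = 1"
    unfolding tau_SS_eq_coord_flip LX_row_def
    by (rule twisted_inner_monomials_complementary[OF \<sigma> sub sub]; use l in auto)+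
  show "twisted_inner (2*l) (tau_SS l) (LX_row l 1) (LX_row l 2) = 0"
    unfolding tau_SS_eq_coord_flip LX_row_def
    by (rule twisted_inner_monomials_overlap[OF \<sigma> sub sub, where j = "l+1"]) auto
qed

lemma twisted_inner_tau_CZ_LX_rows:
  assumes l: "l \<ge> 1"
  shows "twisted_inner (2*l) (tau_CZ l) (LX_row l 1) (LX_row l 1) = 0"
    and "twisted_inner (2*l) (tau_CZ l) (LX_row l 2) (LX_row l 2) = 0"
    and "twisted_inner (2*l) (tau_CZ l) (LX_row l 1) (LX_row l 2) = 1"
proof -
  have \<sigma>: "involution_on {1..2*l} (\<lambda>i. if i = l \<or> i = l+1 then i else 2*l+1-i)"
    by (auto simp: involution_on_def)
  have sub: "{1..l-1} \<union> {l+t-1} \<subseteq> {1..2*l}" if "t \<in> {1,2}" for t using l that by auto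
  show "twisted_inner (2*l) (tau_CZ l) (LX_row l 1) (LX_row l 1) = 0"
    unfolding tau_CZ_eq_coord_flip LX_row_def
    by (rule twisted_inner_monomials_overlap[OF \<sigma> sub sub, where j = l]) auto
  show "twisted_inner (2*l) (tau_CZ l) (LX_row l 2) (LX_row l 2) = 0"
    unfolding tau_CZ_eq_coord_flip LX_row_def
    by (rule twisted_inner_monomials_overlap[OF \<sigma> sub sub, where j = "l+1"]) auto
  show "twisted_inner (2*l) (tau_CZ l) (LX_row l 1) (LX_row l 2) = 1"
    unfolding tau_CZ_eq_coord_flip LX_row_def
    by (rule twisted_inner_monomials_complementary[OF \<sigma> sub sub]) (use l in auto)
qed

lemma F_circ_tau_SS_logical_state:
  assumes "l \<ge> 1"
  shows "F_circ (2*l) (tau_SS l) (logical_state l c)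
       = (\<lambda>v. \<i> ^ (of_bool (c 1) + of_bool (c 2)) * logical_state l c v)"
  unfolding tau_SS_eq_coord_flip
  by (rule F_circ_coord_flip_logical_state)
    (use assms twisted_inner_tau_SS_LX_rows[OF assms] in \<open>auto simp: involution_on_def tau_SS_eq_coord_flip\<close>)

lemma F_circ_tau_CZ_logical_state:
  assumes "l \<ge> 1"
  shows "F_circ (2*l) (tau_CZ l) (logical_state l c)
       = (\<lambda>v. (if c 1 \<and> c 2 then -1 else 1) * logical_state l c v)"
proof -
  have "F_circ (2*l) (tau_CZ l) (logical_state l c)
      = (\<lambda>v. \<i> ^ (2 * of_bool (c 1 \<and> c 2)) * logical_state l c v)"
    unfolding tau_CZ_eq_coord_flip
    by (rule F_circ_coord_flip_logical_state)
      (use assms twisted_inner_tau_CZ_LX_rows[OF assms] in \<open>auto simp: involution_on_def tau_CZ_eq_coord_flip\<close>)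
  then show ?thesis by simp
qed

theorem mainTheorem14:
  fixes l :: nat
  assumes "l \<ge> 1"
  shows "(\<forall>\<psi>\<in>codespace l. F_circ (2*l) (tau_SS l) \<psi> \<in> codespace l)
       \<and> (\<forall>c\<in>cube (l+1). F_circ (2*l) (tau_SS l) (logical_state l c)
              = (\<lambda>v. \<i> ^ (of_bool (c 1) + of_bool (c 2)) * logical_state l c v))
       \<and> (\<forall>\<psi>\<in>codespace l. F_circ (2*l) (tau_CZ l) \<psi> \<in> codespace l)
       \<and> (\<forall>c\<in>cube (l+1). F_circ (2*l) (tau_CZ l) (logical_state l c)
              = (\<lambda>v. (if c 1 \<and> c 2 then -1 else 1) * logical_state l c v))"
proof -
  have SS: "\<forall>c\<in>cube (l+1). F_circ (2*l) (tau_SS l) (logical_state l c)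
              = (\<lambda>v. \<i> ^ (of_bool (c 1) + of_bool (c 2)) * logical_state l c v)"
    using F_circ_tau_SS_logical_state[OF assms] by blast
  have CZ: "\<forall>c\<in>cube (l+1). F_circ (2*l) (tau_CZ l) (logical_state l c)
              = (\<lambda>v. (if c 1 \<and> c 2 then -1 else 1) * logical_state l c v)"
    using F_circ_tau_CZ_logical_state[OF assms] by blast
  show ?thesis using SS CZ F_circ_codespace[OF SS] F_circ_codespace[OF CZ] by blast
qed

end
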